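(* Let $0\le s<t\le T$ and let $\gamma_{(s,t)}$ be the three-part path in $\{\mathrm{Im}\,z\ge0\}$ $$\gamma_{(s,t)}=[s,s+i(t-s)]\cup[s+i(t-s),t+i(t-s)]\cup[t+i(t-s),t],$$ and $\overline{\gamma_{(s,t)}}$ its complex conjugate. Then for any $\varepsilon>0$ and $\alpha\in(0,1)$, $$\int_{\gamma_{(s,t)}}|dz|\int_{\overline{\gamma_{(s,t)}}}|dw|\,|-i(z-w)+\varepsilon|^{\alpha-2}\le c\,|t-s|^\alpha,$$ where $c$ does not depend on $s,t,\varepsilon$. Moreover, for any $\eta>0$ and $\lambda\in(0,\alpha)$, $$\int_{\gamma_{(s,t)}}|dz|\int_{\overline{\gamma_{(s,t)}}}|dw|\,\big|(-i(z-w)+\varepsilon)^{\alpha-2}-(-i(z-w)+\eta)^{\alpha-2}\big|\le c\,|t-s|^{\alpha-\lambda}|\varepsilon-\eta|^\lambda,$$ where $c$ does not depend on $s,t,\varepsilon,\eta$.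
   Context: $|dz|$ denotes integration with respect to arc length along the path. Complex powers are taken with the principal branch (for $z\in\gamma_{(s,t)}$, $w\in\overline{\gamma_{(s,t)}}$ and $\varepsilon>0$, $-i(z-w)+\varepsilon$ has positive real part). *)

theory Defs
  imports "HOL-Analysis.Analysis"
begin

text \<open>The three-part path gamma_(s,t) in the closed upper half plane, as a list of
  oriented line segments (start point, end point).\<close>
definition gamma_path :: "real \<Rightarrow> real \<Rightarrow> (complex \<times> complex) list" where
  "gamma_path s t =
     [ (complex_of_real s, complex_of_real s + \<i> * complex_of_real (t - s)),
       (complex_of_real s + \<i> * complex_of_real (t - s), complex_of_real t + \<i> * complex_of_real (t - s)),
       (complex_of_real t + \<i> * complex_of_real (t - s), complex_of_real t) ]"

definition conj_path :: "(complex \<times> complex) list \<Rightarrow> (complex \<times> complex) list" where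
  "conj_path P = map (\<lambda>(a, b). (cnj a, cnj b)) P"

text \<open>Double arc-length integral int_P |dz| int_Q |dw| f z w of a nonnegative function,
  along polygonal paths P and Q: each segment [a,b] is parametrised by a + u (b - a),
  u in [0,1], with |dz| = |b - a| du.  (Lebesgue nonnegative integral, so the value
  lies in [0, infinity].)\<close>
definition arclen_integral2 ::
  "(complex \<times> complex) list \<Rightarrow> (complex \<times> complex) list \<Rightarrow> (complex \<Rightarrow> complex \<Rightarrow> real) \<Rightarrow> ennreal" where
  "arclen_integral2 P Q f =
     sum_list [ ennreal (cmod (b - a) * cmod (d - c)) *
                (\<integral>\<^sup>+ u. indicator {0..1} u *
                   (\<integral>\<^sup>+ v. indicator {0..1} v *
                       ennreal (f (a + complex_of_real u * (b - a)) (c + complex_of_real v * (d - c))) \<partial>lborel) \<partial>lborel)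
              . (a, b) \<leftarrow> P, (c, d) \<leftarrow> Q ]"

end

theory Submission
  imports Defs
begin

text \<open>
  Write \<open>L = t - s\<close>; all six segments of \<open>\<gamma>\<close> and its conjugate have length \<open>L\<close>.
  Parametrising two of them by \<open>u, v \<in> [0, 1]\<close>, the points \<open>z\<close>, \<open>w\<close> satisfy
  \<open>|z - w| \<ge> L min (u + v, 2 - u - v)\<close>: the two segments either meet at \<open>s\<close> or at \<open>t\<close>,
  where the distance is at least the sum of the distances to the meeting point, or they are at
  distance at least \<open>L\<close>. For \<open>p \<in> (-2, 0)\<close>, \<open>min (u + v, 2 - u - v)\<^sup>p\<close> is bounded by a
  product of integrable endpoint singularities in \<open>u\<close> and \<open>v\<close>, so any kernel dominated by
  \<open>|z - w|\<^sup>p\<close> integrates to \<open>O(L\<^sup>p\<^sup>+\<^sup>2)\<close>. Since \<open>Re (-i(z - w)) \<ge> 0\<close>, both kernels of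
  the theorem are dominated in this way: the first with \<open>p = \<alpha> - 2\<close>, the second with
  \<open>p = \<alpha> - 2 - \<lambda>\<close>, by interpolating between the mean value bound and the trivial bound
  for the difference.
\<close>

definition endpoint_weight :: "real \<Rightarrow> real \<Rightarrow> real" where
  "endpoint_weight q u = u powr q + (1 - u) powr q"

lemma nn_integral_unit_interval_powr:
  assumes "-1 < q"
  shows "(\<integral>\<^sup>+v. indicator {0..1} v * ennreal (v powr q) \<partial>lborel) = ennreal (1 / (q + 1))"
proof -
  have "(\<integral>\<^sup>+v. ennreal (v powr q) * indicator {0..1} v \<partial>lborel) = ennreal (1 powr (q + 1) / (q + 1))"
    by (rule nn_integral_has_integral_lebesgue'[OF _ has_integral_powr_from_0]) (use assms in auto)
  then show ?thesis
    by (simp add: mult.commute)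
qed

lemma nn_integral_unit_interval_reflected_powr:
  assumes "-1 < q"
  shows "(\<integral>\<^sup>+v. indicator {0..1} v * ennreal ((1 - v) powr q) \<partial>lborel) = ennreal (1 / (q + 1))"
proof -
  have "(\<integral>\<^sup>+v. indicator {0..1} v * ennreal ((1 - v) powr q) \<partial>lborel)
      = ennreal \<bar>-1\<bar> * (\<integral>\<^sup>+v. indicator {0..1} (1 + (-1) * v) * ennreal ((1 - (1 + (-1) * v)) powr q) \<partial>lborel)"
    by (rule nn_integral_real_affine) auto
  also have "\<dots> = (\<integral>\<^sup>+v. indicator {0..1} v * ennreal (v powr q) \<partial>lborel)"
    by (auto intro!: nn_integral_cong simp: indicator_def)
  finally show ?thesis
    using nn_integral_unit_interval_powr[OF assms] by simp
qed

lemma nn_integral_endpoint_weight: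
  assumes "-1 < q"
  shows "(\<integral>\<^sup>+v. indicator {0..1} v * ennreal (endpoint_weight q v) \<partial>lborel) = ennreal (2 / (q + 1))"
proof -
  have "(\<integral>\<^sup>+v. indicator {0..1} v * ennreal (endpoint_weight q v) \<partial>lborel)
      = (\<integral>\<^sup>+v. indicator {0..1} v * ennreal (v powr q) + indicator {0..1} v * ennreal ((1 - v) powr q) \<partial>lborel)"
    by (auto intro!: nn_integral_cong simp: endpoint_weight_def ennreal_plus distrib_left)
  also have "\<dots> = (\<integral>\<^sup>+v. indicator {0..1} v * ennreal (v powr q) \<partial>lborel)
      + (\<integral>\<^sup>+v. indicator {0..1} v * ennreal ((1 - v) powr q) \<partial>lborel)"
    by (rule nn_integral_add) auto
  also have "\<dots> = ennreal (2 / (q + 1))"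
    using assms by (simp add: nn_integral_unit_interval_powr nn_integral_unit_interval_reflected_powr
        ennreal_plus[symmetric] divide_nonneg_nonneg)
  finally show ?thesis .
qed

lemma nn_integral_unit_interval_le_endpoint_weight:
  fixes f :: "real \<Rightarrow> ennreal"
  assumes q: "-1 < q" and f: "\<And>x. 0 < x \<Longrightarrow> x < 1 \<Longrightarrow> f x \<le> c * ennreal (endpoint_weight q x)"
  shows "(\<integral>\<^sup>+x. indicator {0..1} x * f x \<partial>lborel) \<le> c * ennreal (2 / (q + 1))"
proof -
  have "AE x in lborel. x \<noteq> 0 \<and> x \<noteq> (1::real)"
    using AE_lborel_singleton[of 0] AE_lborel_singleton[of 1] by eventually_elim auto
  then have "AE x in lborel. indicator {0..1} x * f x \<le> c * (indicator {0..1} x * ennreal (endpoint_weight q x))"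
    by eventually_elim (auto simp: indicator_def f)
  then have "(\<integral>\<^sup>+x. indicator {0..1} x * f x \<partial>lborel)
      \<le> (\<integral>\<^sup>+x. c * (indicator {0..1} x * ennreal (endpoint_weight q x)) \<partial>lborel)"
    by (rule nn_integral_mono_AE)
  also have "\<dots> = c * (\<integral>\<^sup>+x. indicator {0..1} x * ennreal (endpoint_weight q x) \<partial>lborel)"
    by (rule nn_integral_cmult) (simp add: endpoint_weight_def)
  also have "\<dots> = c * ennreal (2 / (q + 1))"
    by (simp add: nn_integral_endpoint_weight[OF q])
  finally show ?thesis .
qed

lemma nn_integral_unit_square_le_endpoint_weights:
  fixes g :: "real \<Rightarrow> real \<Rightarrow> real"
  assumes q: "-1 < q" and C: "0 \<le> C"
    and g: "\<And>u v. 0 < u \<Longrightarrow> u < 1 \<Longrightarrow> 0 < v \<Longrightarrow> v < 1 \<Longrightarrow>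
      g u v \<le> C * endpoint_weight q u * endpoint_weight q v"
  shows "(\<integral>\<^sup>+u. indicator {0..1} u * (\<integral>\<^sup>+v. indicator {0..1} v * ennreal (g u v) \<partial>lborel) \<partial>lborel)
    \<le> ennreal (C * (2 / (q + 1))\<^sup>2)"
proof -
  define Q where "Q = ennreal (2 / (q + 1))"
  have weight_nonneg: "0 \<le> endpoint_weight q x" for x
    by (simp add: endpoint_weight_def)
  have inner: "(\<integral>\<^sup>+v. indicator {0..1} v * ennreal (g u v) \<partial>lborel) \<le> ennreal C * Q * ennreal (endpoint_weight q u)"
    if "0 < u" "u < 1" for u
  proof -
    have "(\<integral>\<^sup>+v. indicator {0..1} v * ennreal (g u v) \<partial>lborel) \<le> ennreal (C * endpoint_weight q u) * Q"
      unfolding Q_def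
      by (rule nn_integral_unit_interval_le_endpoint_weight[OF q])
        (use that C weight_nonneg in \<open>auto intro!: ennreal_leI g simp flip: ennreal_mult\<close>)
    then show ?thesis
      using C weight_nonneg by (simp add: ennreal_mult mult_ac)
  qed
  have "(\<integral>\<^sup>+u. indicator {0..1} u * (\<integral>\<^sup>+v. indicator {0..1} v * ennreal (g u v) \<partial>lborel) \<partial>lborel)
      \<le> ennreal C * Q * Q"
    unfolding Q_def by (rule nn_integral_unit_interval_le_endpoint_weight[OF q inner[unfolded Q_def]])
  also have "\<dots> = ennreal (C * (2 / (q + 1))\<^sup>2)"
    using q unfolding Q_def power2_eq_square mult.assoc[symmetric]
    by (simp only: ennreal_mult''[of "2 / (q + 1)"] divide_nonneg_pos)
  finally show ?thesis .
qed

lemma sum_powr_double_le_mult_powr: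
  fixes x y q :: real
  assumes "0 < x" "0 < y" "q \<le> 0"
  shows "(x + y) powr (2 * q) \<le> x powr q * y powr q"
proof -
  have "(x + y) powr (2 * q) = (x + y) powr q * (x + y) powr q"
    by (simp flip: powr_add)
  also have "\<dots> \<le> x powr q * y powr q"
    using assms by (intro mult_mono powr_mono2') auto
  finally show ?thesis .
qed

lemma min_powr_le_endpoint_weights:
  fixes q u v :: real
  assumes "q \<le> 0" "0 < u" "u < 1" "0 < v" "v < 1"
  shows "min (u + v) (2 - u - v) powr (2 * q) \<le> endpoint_weight q u * endpoint_weight q v"
proof -
  have "(u + v) powr (2 * q) \<le> u powr q * v powr q"
    "((1 - u) + (1 - v)) powr (2 * q) \<le> (1 - u) powr q * (1 - v) powr q"
    using assms by (intro sum_powr_double_le_mult_powr; simp)+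
  moreover have "u powr q * v powr q \<le> endpoint_weight q u * endpoint_weight q v"
    "(1 - u) powr q * (1 - v) powr q \<le> endpoint_weight q u * endpoint_weight q v"
    by (intro mult_mono; simp add: endpoint_weight_def)+
  ultimately show ?thesis
    by (cases "u + v \<le> 2 - u - v") (auto simp: min_def algebra_simps)
qed

lemma gamma_segment_pair_geometry:
  fixes s L u v :: real
  assumes ab: "(a, b) \<in> set (gamma_path s (s + L))"
    and cd: "(c, d) \<in> set (conj_path (gamma_path s (s + L)))"
    and L: "0 \<le> L" and u: "u \<in> {0..1}" and v: "v \<in> {0..1}"
  defines "z \<equiv> a + of_real u * (b - a)" and "w \<equiv> c + of_real v * (d - c)"
  shows "0 \<le> Im z" "Im w \<le> 0" "cmod (b - a) = L" "cmod (d - c) = L"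
    and "L * min (u + v) (2 - u - v) \<le> cmod (z - w)"
proof -
  obtain c' d' where cd': "(c', d') \<in> set (gamma_path s (s + L))" "c = cnj c'" "d = cnj d'"
    using cd by (auto simp: conj_path_def)
  have uL: "0 \<le> u * L" "u * L \<le> L" and vL: "0 \<le> v * L" "v * L \<le> L"
    using L u v by (auto simp: mult_left_le_one_le)
  show "0 \<le> Im z" "Im w \<le> 0"
    using ab cd' uL vL by (auto simp: z_def w_def gamma_path_def algebra_simps)
  show "cmod (b - a) = L" "cmod (d - c) = L"
    using ab cd' L by (auto simp: gamma_path_def norm_mult)
  have scaled_min: "L * min (u + v) (2 - u - v) \<le> L * 1" "L * min (u + v) (2 - u - v) \<le> L * (u + v)"
    "L * min (u + v) (2 - u - v) \<le> L * (2 - u - v)"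
    using L u v by (intro mult_left_mono; simp)+
  then have "L * min (u + v) (2 - u - v) \<le> Im z - Im w \<or> L \<le> \<bar>Re z - Re w\<bar>"
    using ab cd' uL vL by (auto simp: z_def w_def gamma_path_def algebra_simps)
  then show "L * min (u + v) (2 - u - v) \<le> cmod (z - w)"
    using scaled_min abs_Re_le_cmod[of "z - w"] abs_Im_le_cmod[of "z - w"] by auto
qed

lemma arclen_integral2_gamma_le:
  fixes f :: "complex \<Rightarrow> complex \<Rightarrow> real" and p K s t :: real
  assumes p: "-2 < p" "p < 0" and K: "0 \<le> K" and st: "s < t"
    and f: "\<And>z w. 0 \<le> Im z \<Longrightarrow> Im w \<le> 0 \<Longrightarrow> z \<noteq> w \<Longrightarrow> f z w \<le> K * cmod (z - w) powr p"
  shows "arclen_integral2 (gamma_path s t) (conj_path (gamma_path s t)) f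
    \<le> ennreal (9 * K * (4 / (p + 2))\<^sup>2 * (t - s) powr (p + 2))"
proof -
  define L where "L = t - s"
  define q where "q = p / 2"
  have L: "0 < L" and t: "t = s + L" and q: "-1 < q" "q \<le> 0" "p = 2 * q"
    using st p by (auto simp: L_def q_def)
  define X where "X = ennreal (K * (2 / (q + 1))\<^sup>2 * L powr (2 * q + 2))"
  have pair: "ennreal (cmod (b - a) * cmod (d - c)) * (\<integral>\<^sup>+u. indicator {0..1} u *
      (\<integral>\<^sup>+v. indicator {0..1} v * ennreal (f (a + of_real u * (b - a)) (c + of_real v * (d - c))) \<partial>lborel) \<partial>lborel)
    \<le> X"
    if ab: "(a, b) \<in> set (gamma_path s (s + L))" and cd: "(c, d) \<in> set (conj_path (gamma_path s (s + L)))"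
    for a b c d
  proof -
    note geometry = gamma_segment_pair_geometry[OF ab cd less_imp_le[OF L]]
    have "f (a + of_real u * (b - a)) (c + of_real v * (d - c))
        \<le> K * L powr (2 * q) * endpoint_weight q u * endpoint_weight q v"
      if uv: "0 < u" "u < 1" "0 < v" "v < 1" for u v
    proof -
      define z where "z = a + of_real u * (b - a)"
      define w where "w = c + of_real v * (d - c)"
      define m where "m = min (u + v) (2 - u - v)"
      have m: "0 < m" and dist: "L * m \<le> cmod (z - w)"
        using uv geometry(5)[of u v] by (auto simp: m_def z_def w_def)
      have "z \<noteq> w"
        using dist mult_pos_pos[OF L m] by auto
      then have "f z w \<le> K * cmod (z - w) powr (2 * q)"
        using f[of z w] geometry(1,2)[of u v] uv q by (auto simp: z_def w_def)
      also have "\<dots> \<le> K * (L * m) powr (2 * q)"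
        using dist L m q K by (intro mult_left_mono powr_mono2') auto
      also have "\<dots> \<le> K * L powr (2 * q) * (endpoint_weight q u * endpoint_weight q v)"
        using L m K min_powr_le_endpoint_weights[OF q(2) uv]
        by (auto simp: powr_mult m_def mult.assoc intro!: mult_left_mono)
      finally show ?thesis
        by (simp add: z_def w_def mult_ac)
    qed
    then have "(\<integral>\<^sup>+u. indicator {0..1} u *
        (\<integral>\<^sup>+v. indicator {0..1} v * ennreal (f (a + of_real u * (b - a)) (c + of_real v * (d - c))) \<partial>lborel) \<partial>lborel)
      \<le> ennreal (K * L powr (2 * q) * (2 / (q + 1))\<^sup>2)"
      using K q by (intro nn_integral_unit_square_le_endpoint_weights) auto
    then have "ennreal (cmod (b - a) * cmod (d - c)) * (\<integral>\<^sup>+u. indicator {0..1} u *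
        (\<integral>\<^sup>+v. indicator {0..1} v * ennreal (f (a + of_real u * (b - a)) (c + of_real v * (d - c))) \<partial>lborel) \<partial>lborel)
      \<le> ennreal (L * L) * ennreal (K * L powr (2 * q) * (2 / (q + 1))\<^sup>2)"
      using geometry(3,4)[of 0 0] by (auto intro: mult_left_mono)
    also have "\<dots> = X"
      using L K by (simp add: X_def powr_add ennreal_mult'[symmetric] power2_eq_square mult_ac)
    finally show ?thesis .
  qed
  have sum_list_le: "sum_list xs \<le> of_nat (length xs) * X" if "\<And>x. x \<in> set xs \<Longrightarrow> x \<le> X" for xs
    using sum_list_mono[of xs id "\<lambda>_. X"] that by (simp add: sum_list_triv)
  have "arclen_integral2 (gamma_path s (s + L)) (conj_path (gamma_path s (s + L))) f \<le> 9 * X"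
    unfolding arclen_integral2_def
    by (rule sum_list_le[THEN order_trans]) (use pair in fastforce, simp add: gamma_path_def conj_path_def)
  also have "\<dots> = ennreal (9 * K * (4 / (p + 2))\<^sup>2 * (t - s) powr (p + 2))"
  proof -
    have "4 / (p + 2) = 2 / (q + 1)"
      using q by (simp add: field_simps)
    then show ?thesis
      using K by (simp add: X_def L_def q(3) numeral_mult_ennreal mult.assoc)
  qed
  finally show ?thesis
    by (simp only: t)
qed

lemma norm_le_norm_add_of_real:
  fixes A :: complex
  assumes "0 \<le> Re A" "0 \<le> x"
  shows "cmod A \<le> cmod (A + of_real x)"
proof -
  have "(Re A)\<^sup>2 + (Im A)\<^sup>2 \<le> (Re A + x)\<^sup>2 + (Im A)\<^sup>2"
    using assms by (simp add: power2_eq_square algebra_simps)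
  then show ?thesis
    unfolding cmod_def by (simp add: real_sqrt_le_mono)
qed

lemma norm_add_of_real_powr_le:
  fixes A :: complex
  assumes "0 \<le> Re A" "A \<noteq> 0" "0 \<le> x" "p \<le> 0"
  shows "cmod ((A + of_real x) powr of_real p) \<le> cmod A powr p"
  using assms norm_le_norm_add_of_real[of A x]
  by (simp add: norm_powr_real_powr' powr_mono2')

lemma norm_powr_diff_le_mean_value:
  fixes A :: complex
  assumes A: "0 \<le> Re A" "A \<noteq> 0" and "0 < e" "0 < h" and p: "p \<le> 0"
  shows "cmod ((A + of_real e) powr of_real p - (A + of_real h) powr of_real p)
    \<le> \<bar>p\<bar> * cmod A powr (p - 1) * \<bar>e - h\<bar>"
proof -
  define S where "S = (\<lambda>x. A + of_real x) ` {0<..}"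
  have "S = (+) A ` (of_real ` {0<..})"
    by (simp add: S_def image_image)
  then have "convex S"
    by (simp only: convex_translation convex_linear_image[OF linear_of_real] convex_real_interval)
  moreover have "((\<lambda>z. z powr of_real p) has_field_derivative of_real p * z powr (of_real p - 1)) (at z within S)"
    and "norm (of_real p * z powr (of_real p - 1)) \<le> \<bar>p\<bar> * cmod A powr (p - 1)" if "z \<in> S" for z
  proof -
    obtain x where x: "0 < x" "z = A + of_real x"
      using \<open>z \<in> S\<close> by (auto simp: S_def)
    then have "z \<notin> \<real>\<^sub>\<le>\<^sub>0"
      using A by (auto simp: complex_nonpos_Reals_iff)
    then show "((\<lambda>z. z powr of_real p) has_field_derivative of_real p * z powr (of_real p - 1)) (at z within S)"
      by (rule has_field_derivative_at_within[OF has_field_derivative_powr])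
    have "cmod ((A + of_real x) powr (of_real (p - 1))) \<le> cmod A powr (p - 1)"
      using A x p by (intro norm_add_of_real_powr_le) auto
    then show "norm (of_real p * z powr (of_real p - 1)) \<le> \<bar>p\<bar> * cmod A powr (p - 1)"
      using x by (simp add: norm_mult mult_left_mono)
  qed
  moreover have "A + of_real e \<in> S" "A + of_real h \<in> S"
    using assms by (simp_all add: S_def)
  ultimately have "cmod ((A + of_real e) powr of_real p - (A + of_real h) powr of_real p)
      \<le> \<bar>p\<bar> * cmod A powr (p - 1) * cmod ((A + of_real e) - (A + of_real h))"
    by (rule field_differentiable_bound)
  also have "cmod ((A + of_real e) - (A + of_real h)) = \<bar>e - h\<bar>"
    by (simp flip: of_real_diff)
  finally show ?thesis .
qed

lemma le_powr_interpolation: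
  fixes D a b l :: real
  assumes "0 \<le> D" "D \<le> a" "D \<le> b" "0 \<le> l" "l \<le> 1"
  shows "D \<le> a powr l * b powr (1 - l)"
proof (cases "D = 0")
  case False
  then have "D = D powr l * D powr (1 - l)"
    using assms by (simp flip: powr_add)
  also have "\<dots> \<le> a powr l * b powr (1 - l)"
    using assms by (intro mult_mono powr_mono2) auto
  finally show ?thesis .
qed simp

lemma norm_powr_diff_le_interpolated:
  fixes A :: complex
  assumes A: "0 \<le> Re A" "A \<noteq> 0" and eh: "0 < e" "0 < h" and p: "-2 \<le> p" "p \<le> 0"
    and l: "0 \<le> l" "l \<le> 1"
  shows "cmod ((A + of_real e) powr of_real p - (A + of_real h) powr of_real p)
    \<le> 2 * \<bar>e - h\<bar> powr l * cmod A powr (p - l)"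
proof -
  define D where "D = cmod ((A + of_real e) powr of_real p - (A + of_real h) powr of_real p)"
  define r where "r = cmod A"
  have r: "0 < r"
    using A by (simp add: r_def)
  have "D \<le> \<bar>p\<bar> * r powr (p - 1) * \<bar>e - h\<bar>"
    using norm_powr_diff_le_mean_value[OF A eh p(2)] by (simp add: D_def r_def)
  also have "\<dots> \<le> 2 * r powr (p - 1) * \<bar>e - h\<bar>"
    using p by (intro mult_right_mono) auto
  finally have mean_value: "D \<le> 2 * r powr (p - 1) * \<bar>e - h\<bar>" .
  have "D \<le> cmod ((A + of_real e) powr of_real p) + cmod ((A + of_real h) powr of_real p)"
    unfolding D_def by (rule norm_triangle_ineq4)
  also have "\<dots> \<le> 2 * r powr p"
    using norm_add_of_real_powr_le[OF A _ p(2), of e] norm_add_of_real_powr_le[OF A _ p(2), of h] eh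
    by (simp add: r_def)
  finally have trivial: "D \<le> 2 * r powr p" .
  have "D \<le> (2 * r powr (p - 1) * \<bar>e - h\<bar>) powr l * (2 * r powr p) powr (1 - l)"
    using mean_value trivial l by (intro le_powr_interpolation) (auto simp: D_def)
  also have "\<dots> = (2 powr l * 2 powr (1 - l)) * \<bar>e - h\<bar> powr l * (r powr ((p - 1) * l) * r powr (p * (1 - l)))"
    by (simp add: powr_mult powr_powr mult_ac)
  also have "\<dots> = 2 powr (l + (1 - l)) * \<bar>e - h\<bar> powr l * r powr ((p - 1) * l + p * (1 - l))"
    by (simp only: powr_add)
  also have "\<dots> = 2 * \<bar>e - h\<bar> powr l * r powr (p - l)"
    by (simp add: algebra_simps)
  finally show ?thesis
    by (simp add: D_def r_def)
qed

lemma arclen_integral2_gamma_kernel_le: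
  assumes "0 < \<alpha>" "\<alpha> < 1" "s < t" "0 < \<epsilon>"
  shows "arclen_integral2 (gamma_path s t) (conj_path (gamma_path s t))
      (\<lambda>z w. cmod (- \<i> * (z - w) + of_real \<epsilon>) powr (\<alpha> - 2))
    \<le> ennreal (9 * (4 / \<alpha>)\<^sup>2 * (t - s) powr \<alpha>)"
proof -
  have "cmod (- \<i> * (z - w) + of_real \<epsilon>) powr (\<alpha> - 2) \<le> 1 * cmod (z - w) powr (\<alpha> - 2)"
    if "0 \<le> Im z" "Im w \<le> 0" "z \<noteq> w" for z w
    using that assms norm_le_norm_add_of_real[of "- \<i> * (z - w)" \<epsilon>]
    by (simp add: norm_mult powr_mono2')
  then show ?thesis
    using arclen_integral2_gamma_le[of "\<alpha> - 2" 1 s t] assms by simp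
qed

lemma arclen_integral2_gamma_kernel_diff_le:
  assumes "0 < lam" "lam < \<alpha>" "\<alpha> < 1" "s < t" "0 < \<epsilon>" "0 < \<eta>"
  shows "arclen_integral2 (gamma_path s t) (conj_path (gamma_path s t))
      (\<lambda>z w. cmod ((- \<i> * (z - w) + of_real \<epsilon>) powr of_real (\<alpha> - 2)
        - (- \<i> * (z - w) + of_real \<eta>) powr of_real (\<alpha> - 2)))
    \<le> ennreal (18 * (4 / (\<alpha> - lam))\<^sup>2 * (t - s) powr (\<alpha> - lam) * \<bar>\<epsilon> - \<eta>\<bar> powr lam)"
proof -
  have "cmod ((- \<i> * (z - w) + of_real \<epsilon>) powr of_real (\<alpha> - 2) - (- \<i> * (z - w) + of_real \<eta>) powr of_real (\<alpha> - 2))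
      \<le> 2 * \<bar>\<epsilon> - \<eta>\<bar> powr lam * cmod (z - w) powr (\<alpha> - 2 - lam)"
    if "0 \<le> Im z" "Im w \<le> 0" "z \<noteq> w" for z w
    using that assms norm_powr_diff_le_interpolated[of "- \<i> * (z - w)" \<epsilon> \<eta> "\<alpha> - 2" lam]
    by (simp add: norm_mult)
  then show ?thesis
    using arclen_integral2_gamma_le[of "\<alpha> - 2 - lam" "2 * \<bar>\<epsilon> - \<eta>\<bar> powr lam" s t] assms
    by (simp add: mult_ac)
qed

theorem lemma6p1:
  fixes T \<alpha> :: real
  assumes "0 < \<alpha>" "\<alpha> < 1"
  shows "(\<exists>c::real. \<forall>s t \<epsilon>. 0 \<le> s \<longrightarrow> s < t \<longrightarrow> t \<le> T \<longrightarrow> 0 < \<epsilon> \<longrightarrow>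
            arclen_integral2 (gamma_path s t) (conj_path (gamma_path s t))
              (\<lambda>z w. cmod (- \<i> * (z - w) + complex_of_real \<epsilon>) powr (\<alpha> - 2))
            \<le> ennreal (c * \<bar>t - s\<bar> powr \<alpha>))
       \<and> (\<forall>lam::real. 0 < lam \<longrightarrow> lam < \<alpha> \<longrightarrow>
           (\<exists>c::real. \<forall>s t \<epsilon> \<eta>. 0 \<le> s \<longrightarrow> s < t \<longrightarrow> t \<le> T \<longrightarrow> 0 < \<epsilon> \<longrightarrow> 0 < \<eta> \<longrightarrow>
            arclen_integral2 (gamma_path s t) (conj_path (gamma_path s t))
              (\<lambda>z w. cmod ((- \<i> * (z - w) + complex_of_real \<epsilon>) powr complex_of_real (\<alpha> - 2)
                          - (- \<i> * (z - w) + complex_of_real \<eta>) powr complex_of_real (\<alpha> - 2)))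
            \<le> ennreal (c * \<bar>t - s\<bar> powr (\<alpha> - lam) * \<bar>\<epsilon> - \<eta>\<bar> powr lam)))"
  using assms
  apply (intro conjI allI impI)
  subgoal
    by (rule exI[of _ "9 * (4 / \<alpha>)\<^sup>2"]) (use arclen_integral2_gamma_kernel_le in auto)
  subgoal for lam
    by (rule exI[of _ "18 * (4 / (\<alpha> - lam))\<^sup>2"]) (use arclen_integral2_gamma_kernel_diff_le in auto)
  done

end
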